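(* For $s\in\{1/2,1,3/2,\dots\}$, integers $0\le\sigma\le 2s$ and $-\sigma\le\mu\le\sigma$, let $p^{(s)}_{\sigma\mu}$ be the Majorana polynomial of the tensor operator $T^{(s)}_{\sigma\mu}$. Then: (1) $L\big(p^{(s)}_{\sigma\mu}\big)=\frac{\sqrt{(2s+\sigma+1)(2s-\sigma)}}{2s}\,p^{(s-1/2)}_{\sigma\mu}$ if $s>\sigma/2$, and $L\big(p^{(s)}_{\sigma\mu}\big)=0$ otherwise. In particular $(2s+1)^{-1/2}L\big(p^{(s)}_{00}\big)=(2s)^{-1/2}p^{(s-1/2)}_{00}$, and consequently $L$ preserves traces: for every operator $C$ on $\mathcal{H}_s$ ($s\ge 1$), the operator $C'$ on $\mathcal{H}_{s-1/2}$ with $p_{C'}=L(p_C)$ satisfies $\mathrm{Tr}\,C'=\mathrm{Tr}\,C$. (2) For every $\sigma\le 2s$, \[ p^{(s)}_{\sigma\mu}(z)=l(s,\sigma)^{-1}\,(z^az_a)^{2s-\sigma}\,p^{(\sigma/2)}_{\sigma\mu}(z),\qquad l(s,\sigma)=\sqrt{\frac{(2s+\sigma+1)!\,(2s-\sigma)!}{(2\sigma+1)!}}\;\frac{\sigma!}{(2s)!}. \]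
   Context: $\mathcal{H}_s$ is the spin-$s$ Hilbert space with orthonormal $S_z$-eigenbasis $\{|s,m\rangle\}$. The tensor operators are $T^{(s)}_{\sigma\mu}=\sum_{m,m'=-s}^{s}(-1)^{s-m'}C^{\sigma\mu}_{sm,\,s,-m'}|s,m\rangle\langle s,m'|$, where $C^{jm}_{j_1m_1,j_2m_2}$ are the standard Clebsch–Gordan coefficients. Treat $z_1,z_2,z^1,z^2$ as independent variables, $\partial_a=\partial/\partial z_a$, $\partial^a=\partial/\partial z^a$, and repeated indices $a\in\{1,2\}$ are summed (so $z^az_a=z^1z_1+z^2z_2$). With $\langle -\mathbf n_B|=\sum_m(-1)^{s-m}\sqrt{\binom{2s}{s-m}}z_1^{s+m}z_2^{s-m}\langle s,m|$ and $|-\mathbf n_B\rangle=\sum_m(-1)^{s-m}\sqrt{\binom{2s}{s-m}}(z^1)^{s+m}(z^2)^{s-m}|s,m\rangle$, the Majorana polynomial of an operator $C$ on $\mathcal{H}_s$ is $p_C=\langle-\mathbf n_B|C|-\mathbf n_B\rangle$; this is a bijection from operators on $\mathcal{H}_s$ to the space $P^{(N,N)}$ ($N=2s$) of polynomials all of whose monomials $z_1^\alpha z_2^\beta(z^1)^\gamma(z^2)^\delta$ have $\alpha+\beta=\gamma+\delta=N$. The partial trace operator $L:P^{(N,N)}\to P^{(N-1,N-1)}$ is $L(p)=N^{-2}\,\partial_a\partial^a p$. *)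

theory Defs
  imports "HOL-Analysis.Analysis"
begin

text \<open>A spin s in {0, 1/2, 1, ...} is represented by its double N = 2s (a nat).
  Magnetic quantum numbers m are represented by their doubles (integers 2m). All
  Clebsch-Gordan arguments are doubled angular momenta / projections.\<close>

definition half :: "int \<Rightarrow> nat" where
  "half x = nat (x div 2)"

text \<open>Inverse factorial of a doubled argument, with the standard convention 1/(-n)! = 0.\<close>
definition ifact2 :: "int \<Rightarrow> real" where
  "ifact2 x = (if x < 0 then 0 else 1 / fact (half x))"

definition fact2 :: "int \<Rightarrow> real" where
  "fact2 x = fact (half x)"

text \<open>Standard (Condon-Shortley) Clebsch-Gordan coefficient C^{J M}_{j1 m1, j2 m2}
  via Racah's formula; all six arguments are doubled.\<close>
definition cg :: "int \<Rightarrow> int \<Rightarrow> int \<Rightarrow> int \<Rightarrow> int \<Rightarrow> int \<Rightarrow> real" where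
  "cg j1 m1 j2 m2 J M =
    (if 0 \<le> j1 \<and> 0 \<le> j2 \<and> 0 \<le> J \<and> \<bar>m1\<bar> \<le> j1 \<and> \<bar>m2\<bar> \<le> j2 \<and> \<bar>M\<bar> \<le> J
        \<and> even (j1 + m1) \<and> even (j2 + m2) \<and> even (J + M) \<and> even (j1 + j2 + J)
        \<and> \<bar>j1 - j2\<bar> \<le> J \<and> J \<le> j1 + j2 \<and> M = m1 + m2
     then sqrt (real_of_int (J + 1) * fact2 (J + j1 - j2) * fact2 (J - j1 + j2)
                  * fact2 (j1 + j2 - J) / fact2 (j1 + j2 + J + 2))
        * sqrt (fact2 (J + M) * fact2 (J - M) * fact2 (j1 - m1) * fact2 (j1 + m1)
                  * fact2 (j2 - m2) * fact2 (j2 + m2))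
        * (\<Sum>k\<in>{0..half (j1 + j2)}. (-1) ^ k
             * ifact2 (2 * int k) * ifact2 (j1 + j2 - J - 2 * int k)
             * ifact2 (j1 - m1 - 2 * int k) * ifact2 (j2 + m2 - 2 * int k)
             * ifact2 (J - j2 + m1 + 2 * int k) * ifact2 (J - j1 - m2 + 2 * int k))
     else 0)"

text \<open>Doubled magnetic quantum numbers of spin N/2: 2m \<in> {-N, -N+2, ..., N}.\<close>
definition spins :: "nat \<Rightarrow> int set" where
  "spins N = {m. - int N \<le> m \<and> m \<le> int N \<and> even (int N + m)}"

text \<open>An operator on H_{N/2} is given by its matrix entries C m m' = <s,m|C|s,m'>
  (doubled indices; entries outside spins N are irrelevant).\<close>
type_synonym op = "int \<Rightarrow> int \<Rightarrow> complex"

text \<open>Functions of the four independent variables z_1, z_2, z^1, z^2 (in this order).\<close>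
type_synonym fn4 = "complex \<Rightarrow> complex \<Rightarrow> complex \<Rightarrow> complex \<Rightarrow> complex"

definition tensor_op :: "nat \<Rightarrow> nat \<Rightarrow> int \<Rightarrow> op" where
  "tensor_op N \<sigma> \<mu> = (\<lambda>m m'. (-1) ^ half (int N - m')
      * complex_of_real (cg (int N) m (int N) (- m') (2 * int \<sigma>) (2 * \<mu>)))"

definition majorana :: "nat \<Rightarrow> op \<Rightarrow> fn4" where
  "majorana N C = (\<lambda>z1 z2 w1 w2.
     \<Sum>m\<in>spins N. \<Sum>m'\<in>spins N.
       ((-1) ^ half (int N - m) * complex_of_real (sqrt (real (N choose half (int N - m))))
          * z1 ^ half (int N + m) * z2 ^ half (int N - m))
       * C m m'
       * ((-1) ^ half (int N - m') * complex_of_real (sqrt (real (N choose half (int N - m'))))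
          * w1 ^ half (int N + m') * w2 ^ half (int N - m')))"

definition op_trace :: "nat \<Rightarrow> op \<Rightarrow> complex" where
  "op_trace N C = (\<Sum>m\<in>spins N. C m m)"

definition tpoly :: "nat \<Rightarrow> nat \<Rightarrow> int \<Rightarrow> fn4" where
  "tpoly N \<sigma> \<mu> = majorana N (tensor_op N \<sigma> \<mu>)"

definition d_lo1 :: "fn4 \<Rightarrow> fn4" where
  "d_lo1 p = (\<lambda>z1 z2 w1 w2. deriv (\<lambda>t. p t z2 w1 w2) z1)"
definition d_lo2 :: "fn4 \<Rightarrow> fn4" where
  "d_lo2 p = (\<lambda>z1 z2 w1 w2. deriv (\<lambda>t. p z1 t w1 w2) z2)"
definition d_up1 :: "fn4 \<Rightarrow> fn4" where
  "d_up1 p = (\<lambda>z1 z2 w1 w2. deriv (\<lambda>t. p z1 z2 t w2) w1)"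
definition d_up2 :: "fn4 \<Rightarrow> fn4" where
  "d_up2 p = (\<lambda>z1 z2 w1 w2. deriv (\<lambda>t. p z1 z2 w1 t) w2)"

definition Lop :: "nat \<Rightarrow> fn4 \<Rightarrow> fn4" where
  "Lop N p = (\<lambda>z1 z2 w1 w2. inverse (of_nat N ^ 2)
      * (d_lo1 (d_up1 p) z1 z2 w1 w2 + d_lo2 (d_up2 p) z1 z2 w1 w2))"

definition lcoef :: "nat \<Rightarrow> nat \<Rightarrow> real" where
  "lcoef N \<sigma> = sqrt (fact (N + \<sigma> + 1) * fact (N - \<sigma>) / fact (2 * \<sigma> + 1))
                 * fact \<sigma> / fact N"

end

theory Submission
  imports Defs
begin

text \<open>Racah's formula for the Clebsch-Gordan coefficients of two equal spins factors the
  Majorana polynomial of \<open>T\<^sup>(\<^sup>s\<^sup>)\<^sub>\<sigma>\<^sub>\<mu>\<close> as a constant times \<open>u\<^sup>2\<^sup>s\<^sup>-\<^sup>\<sigma>\<close>, \<open>u = z\<^sup>a z\<^sub>a\<close>,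
  times a kernel \<open>G\<^sub>\<sigma>\<^sub>\<mu>\<close> (a signed sum of products of divided powers) that does not
  depend on \<open>s\<close>; comparing the constants gives (2). The kernel is homogeneous of degree \<open>\<sigma>\<close>
  in \<open>(z\<^sub>1, z\<^sub>2)\<close> and in \<open>(z\<^sup>1, z\<^sup>2)\<close>, and harmonic, \<open>\<partial>\<^sub>a \<partial>\<^sup>a G = 0\<close>; with Euler's identity
  this gives \<open>\<partial>\<^sub>a \<partial>\<^sup>a (u\<^sup>n G) = n (n + 1 + 2\<sigma>) u\<^sup>n\<^sup>-\<^sup>1 G\<close>, hence (1).
  For the traces: \<open>L\<close> maps the Majorana polynomial of \<open>C\<close> to that of the partial trace of \<open>C\<close>
  over one spin-1/2 constituent of \<open>H\<^sub>s\<close>, which preserves traces. Iterating \<open>L\<close> down to spin 0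
  and evaluating at \<open>z = 0\<close> therefore computes \<open>Tr C\<close> from \<open>p\<^sub>C\<close> alone.\<close>

section \<open>Divided powers\<close>

definition inv_fact :: "int \<Rightarrow> real" where
  "inv_fact k = (if k < 0 then 0 else 1 / fact (nat k))"

definition divpow :: "int \<Rightarrow> 'a::real_normed_field \<Rightarrow> 'a" where
  "divpow k z = of_real (inv_fact k) * z ^ nat k"

lemma inv_fact_of_nat [simp]: "inv_fact (int n) = 1 / fact n"
  by (simp add: inv_fact_def)

lemma inv_fact_neg: "k < 0 \<Longrightarrow> inv_fact k = 0"
  by (simp add: inv_fact_def)

lemma inv_fact_pred: "inv_fact (k - 1) = of_int k * inv_fact k"
proof (cases "k \<ge> 1")
  case True
  then have "nat k = Suc (nat (k - 1))" "k = of_nat (Suc (nat (k - 1)))" by simp_all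
  then show ?thesis by (simp add: inv_fact_def field_simps)
next
  case False
  then consider "k = 0" | "k < 0" by linarith
  then show ?thesis by cases (simp_all add: inv_fact_def)
qed

lemma divpow_neg: "k < 0 \<Longrightarrow> divpow k z = 0"
  by (simp add: divpow_def inv_fact_neg)

lemma mult_divpow_pred: "z * divpow (k - 1) z = of_int k * divpow k z"
proof (cases "k \<ge> 1")
  case True
  then have "nat k = Suc (nat (k - 1))" by simp
  then show ?thesis by (simp add: divpow_def inv_fact_pred mult_ac)
next
  case False
  then consider "k = 0" | "k < 0" by linarith
  then show ?thesis by cases (simp_all add: divpow_def inv_fact_def)
qed

lemma has_field_derivative_divpow: "(divpow k has_field_derivative divpow (k - 1) z) (at z)"
proof (cases "k \<ge> 1")
  case True
  define n where "n = nat (k - 1)"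
  have n: "nat k = Suc n" "nat (k - 1) = n" "k = 1 + of_nat n"
    using True by (simp_all add: n_def)
  have "((\<lambda>z. of_real (inv_fact k) * z ^ Suc n) has_field_derivative
          of_real (inv_fact k) * ((1 + of_nat n) * (1 * z ^ n))) (at z)"
    by (intro DERIV_cmult DERIV_power_Suc DERIV_ident)
  then show ?thesis
    unfolding divpow_def n(1,2) inv_fact_pred[of k]
    by (rule DERIV_cong) (simp add: n(3))
next
  case False
  then have "divpow (k - 1) z = 0" and const: "divpow k = (\<lambda>_. of_real (inv_fact k))"
    by (auto simp: divpow_def inv_fact_def)
  then show ?thesis unfolding const by simp
qed

lemma DERIV_divpow [derivative_intros]:
  "(f has_field_derivative D) (at x within S) \<Longrightarrow>
    ((\<lambda>x. divpow k (f x)) has_field_derivative divpow (k - 1) (f x) * D) (at x within S)"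
  by (rule DERIV_chain2[OF has_field_derivative_divpow])

lemma divpow_euler_pair:
  "x * (c * divpow (a - 1) x * divpow b y * e) + y * (c * divpow a x * divpow (b - 1) y * e)
     = of_int (a + b) * (c * divpow a x * divpow b y * e)"
proof -
  have "x * (c * divpow (a - 1) x * divpow b y * e) + y * (c * divpow a x * divpow (b - 1) y * e)
      = (x * divpow (a - 1) x) * (c * divpow b y * e) + (y * divpow (b - 1) y) * (c * divpow a x * e)"
    by (simp add: mult_ac)
  then show ?thesis by (simp add: mult_divpow_pred algebra_simps)
qed

lemma divpow_binomial:
  "(\<Sum>k\<le>n. divpow (int (n - k)) x * divpow (int k) y) = (x + y) ^ n / fact n"
proof -
  have "(x + y) ^ n / fact n = (\<Sum>k\<le>n. of_nat (n choose k) * y ^ k * x ^ (n - k) / fact n)"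
    using binomial_ring[of y x n] by (simp add: add.commute sum_divide_distrib)
  also have "\<dots> = (\<Sum>k\<le>n. divpow (int (n - k)) x * divpow (int k) y)"
  proof (intro sum.cong refl)
    fix k assume "k \<in> {..n}"
    then have "(of_nat (n choose k) :: 'a) = fact n / (fact k * fact (n - k))"
      by (simp add: binomial_fact)
    then show "of_nat (n choose k) * y ^ k * x ^ (n - k) / fact n = divpow (int (n - k)) x * divpow (int k) y"
      by (simp add: divpow_def mult_ac)
  qed
  finally show ?thesis ..
qed

section \<open>The kernel \<open>G\<^sub>\<sigma>\<^sub>\<mu>\<close>\<close>

(* Lowering the four exponents by p, q, r, s makes the family closed under the partial derivatives. *)
definition tensor_kernel_deriv :: "nat \<Rightarrow> int \<Rightarrow> int \<Rightarrow> int \<Rightarrow> int \<Rightarrow> int \<Rightarrow> fn4" where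
  "tensor_kernel_deriv \<sigma> \<mu> p q r s = (\<lambda>z1 z2 w1 w2. \<Sum>i\<le>\<sigma>. (-1) ^ i
      * divpow (int \<sigma> - int i - p) z1 * divpow (int i - q) z2
      * divpow (int \<sigma> - \<mu> - int i - r) w1 * divpow (\<mu> + int i - s) w2)"

abbreviation tensor_kernel :: "nat \<Rightarrow> int \<Rightarrow> fn4" where
  "tensor_kernel \<sigma> \<mu> \<equiv> tensor_kernel_deriv \<sigma> \<mu> 0 0 0 0"

lemma tensor_kernel_deriv_z1:
  "((\<lambda>t. tensor_kernel_deriv \<sigma> \<mu> p q r s t z2 w1 w2) has_field_derivative
     tensor_kernel_deriv \<sigma> \<mu> (p + 1) q r s z1 z2 w1 w2) (at z1)"
  unfolding tensor_kernel_deriv_def by (auto intro!: derivative_eq_intros simp: algebra_simps)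

lemma tensor_kernel_deriv_z2:
  "((\<lambda>t. tensor_kernel_deriv \<sigma> \<mu> p q r s z1 t w1 w2) has_field_derivative
     tensor_kernel_deriv \<sigma> \<mu> p (q + 1) r s z1 z2 w1 w2) (at z2)"
  unfolding tensor_kernel_deriv_def by (auto intro!: derivative_eq_intros simp: algebra_simps)

lemma tensor_kernel_deriv_w1:
  "((\<lambda>t. tensor_kernel_deriv \<sigma> \<mu> p q r s z1 z2 t w2) has_field_derivative
     tensor_kernel_deriv \<sigma> \<mu> p q (r + 1) s z1 z2 w1 w2) (at w1)"
  unfolding tensor_kernel_deriv_def by (auto intro!: derivative_eq_intros simp: algebra_simps)

lemma tensor_kernel_deriv_w2:
  "((\<lambda>t. tensor_kernel_deriv \<sigma> \<mu> p q r s z1 z2 w1 t) has_field_derivative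
     tensor_kernel_deriv \<sigma> \<mu> p q r (s + 1) z1 z2 w1 w2) (at w2)"
  unfolding tensor_kernel_deriv_def by (auto intro!: derivative_eq_intros simp: algebra_simps)

lemma tensor_kernel_euler_z:
  "z1 * tensor_kernel_deriv \<sigma> \<mu> 1 0 0 0 z1 z2 w1 w2 + z2 * tensor_kernel_deriv \<sigma> \<mu> 0 1 0 0 z1 z2 w1 w2
     = of_nat \<sigma> * tensor_kernel \<sigma> \<mu> z1 z2 w1 w2"
proof -
  have "z1 * ((-1) ^ i * divpow (int \<sigma> - int i - 1) z1 * divpow (int i) z2 * c)
      + z2 * ((-1) ^ i * divpow (int \<sigma> - int i) z1 * divpow (int i - 1) z2 * c)
      = of_nat \<sigma> * ((-1) ^ i * divpow (int \<sigma> - int i) z1 * divpow (int i) z2 * c)" for i c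
    using divpow_euler_pair[of z1 "(-1) ^ i" "int \<sigma> - int i" "int i" z2 c] by (simp add: algebra_simps)
  then show ?thesis
    unfolding tensor_kernel_deriv_def by (simp add: sum_distrib_left sum.distrib[symmetric] mult.assoc)
qed

lemma tensor_kernel_euler_w:
  "w1 * tensor_kernel_deriv \<sigma> \<mu> 0 0 1 0 z1 z2 w1 w2 + w2 * tensor_kernel_deriv \<sigma> \<mu> 0 0 0 1 z1 z2 w1 w2
     = of_nat \<sigma> * tensor_kernel \<sigma> \<mu> z1 z2 w1 w2"
proof -
  have "w1 * (c * divpow (int \<sigma> - \<mu> - int i - 1) w1 * divpow (\<mu> + int i) w2)
      + w2 * (c * divpow (int \<sigma> - \<mu> - int i) w1 * divpow (\<mu> + int i - 1) w2)
      = of_nat \<sigma> * (c * divpow (int \<sigma> - \<mu> - int i) w1 * divpow (\<mu> + int i) w2)" for i c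
    using divpow_euler_pair[of w1 c "int \<sigma> - \<mu> - int i" "\<mu> + int i" w2 1] by (simp add: algebra_simps)
  then show ?thesis
    unfolding tensor_kernel_deriv_def by (simp add: sum_distrib_left sum.distrib[symmetric])
qed

lemma tensor_kernel_harmonic:
  "tensor_kernel_deriv \<sigma> \<mu> 1 0 1 0 z1 z2 w1 w2 + tensor_kernel_deriv \<sigma> \<mu> 0 1 0 1 z1 z2 w1 w2 = 0"
proof (cases \<sigma>)
  case 0
  then show ?thesis by (simp add: tensor_kernel_deriv_def divpow_neg)
next
  case (Suc n)
  define T where "T i = (-1) ^ i * divpow (int \<sigma> - int i - 1) z1 * divpow (int i) z2
      * divpow (int \<sigma> - \<mu> - int i - 1) w1 * divpow (\<mu> + int i) w2" for i
  have sign: "(-1::complex) ^ i = - ((-1) ^ (i - 1))" if "i > 0" for i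
    using that by (cases i) simp_all
  have "tensor_kernel_deriv \<sigma> \<mu> 0 1 0 1 z1 z2 w1 w2 = (\<Sum>i\<le>Suc n. - T (i - 1) * of_bool (i > 0))"
    unfolding tensor_kernel_deriv_def T_def Suc
    by (intro sum.cong refl) (auto simp: divpow_neg sign algebra_simps)
  also have "\<dots> = - (\<Sum>i\<le>n. T i)"
    unfolding sum.atMost_Suc_shift by (simp add: sum_negf)
  also have "(\<Sum>i\<le>n. T i) = tensor_kernel_deriv \<sigma> \<mu> 1 0 1 0 z1 z2 w1 w2"
    unfolding tensor_kernel_deriv_def T_def Suc by (simp add: divpow_neg)
  finally show ?thesis by simp
qed

section \<open>The partial trace operator on \<open>(z\<^sup>a z\<^sub>a)\<^sup>n G\<close>\<close>

lemma deriv_deriv_power_mult: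
  fixes g gx gy gxy :: "complex \<Rightarrow> complex \<Rightarrow> complex"
  assumes gx: "\<And>x y. ((\<lambda>t. g t y) has_field_derivative gx x y) (at x)"
    and gy: "\<And>x y. ((\<lambda>t. g x t) has_field_derivative gy x y) (at y)"
    and gxy: "\<And>x y. ((\<lambda>t. gy t y) has_field_derivative gxy x y) (at x)"
  shows "deriv (\<lambda>x. deriv (\<lambda>y. (y * x + e) ^ n * g x y) y) x
    = of_nat n * of_nat (n - 1) * (y * x + e) ^ (n - 2) * (y * x) * g x y
      + of_nat n * (y * x + e) ^ (n - 1) * (g x y + x * gx x y + y * gy x y)
      + (y * x + e) ^ n * gxy x y"
proof -
  have inner: "deriv (\<lambda>y. (y * x + e) ^ n * g x y) y
      = of_nat n * (y * x + e) ^ (n - 1) * x * g x y + (y * x + e) ^ n * gy x y" for x y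
    by (rule DERIV_imp_deriv) (auto intro!: derivative_eq_intros gy)
  have "((\<lambda>x. of_nat n * (y * x + e) ^ (n - 1) * x * g x y + (y * x + e) ^ n * gy x y)
     has_field_derivative
       of_nat n * of_nat (n - 1) * (y * x + e) ^ (n - 2) * (y * x) * g x y
      + of_nat n * (y * x + e) ^ (n - 1) * (g x y + x * gx x y + y * gy x y)
      + (y * x + e) ^ n * gxy x y) (at x)"
    by (rule derivative_eq_intros gx gxy refl)+ (simp add: numeral_2_eq_2 algebra_simps)
  then show ?thesis unfolding inner by (rule DERIV_imp_deriv)
qed

lemma Lop_power_mult:
  fixes G Gz Gz' Gw Gw' H H' :: fn4
  assumes G_z1: "\<And>z1 z2 w1 w2. ((\<lambda>t. G t z2 w1 w2) has_field_derivative Gz z1 z2 w1 w2) (at z1)"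
    and G_z2: "\<And>z1 z2 w1 w2. ((\<lambda>t. G z1 t w1 w2) has_field_derivative Gz' z1 z2 w1 w2) (at z2)"
    and G_w1: "\<And>z1 z2 w1 w2. ((\<lambda>t. G z1 z2 t w2) has_field_derivative Gw z1 z2 w1 w2) (at w1)"
    and G_w2: "\<And>z1 z2 w1 w2. ((\<lambda>t. G z1 z2 w1 t) has_field_derivative Gw' z1 z2 w1 w2) (at w2)"
    and G_w1z1: "\<And>z1 z2 w1 w2. ((\<lambda>t. Gw t z2 w1 w2) has_field_derivative H z1 z2 w1 w2) (at z1)"
    and G_w2z2: "\<And>z1 z2 w1 w2. ((\<lambda>t. Gw' z1 t w1 w2) has_field_derivative H' z1 z2 w1 w2) (at z2)"
  shows "Lop N (\<lambda>z1 z2 w1 w2. (w1 * z1 + w2 * z2) ^ n * G z1 z2 w1 w2) z1 z2 w1 w2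
    = (of_nat n * of_nat (n - 1) * (w1 * z1 + w2 * z2) ^ (n - 2) * (w1 * z1 + w2 * z2) * G z1 z2 w1 w2
       + of_nat n * (w1 * z1 + w2 * z2) ^ (n - 1) * (2 * G z1 z2 w1 w2
           + (z1 * Gz z1 z2 w1 w2 + z2 * Gz' z1 z2 w1 w2) + (w1 * Gw z1 z2 w1 w2 + w2 * Gw' z1 z2 w1 w2))
       + (w1 * z1 + w2 * z2) ^ n * (H z1 z2 w1 w2 + H' z1 z2 w1 w2)) / of_nat N ^ 2"
proof -
  define u where "u = w1 * z1 + w2 * z2"
  have pair1: "d_lo1 (d_up1 (\<lambda>z1 z2 w1 w2. (w1 * z1 + w2 * z2) ^ n * G z1 z2 w1 w2)) z1 z2 w1 w2
    = of_nat n * of_nat (n - 1) * u ^ (n - 2) * (w1 * z1) * G z1 z2 w1 w2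
      + of_nat n * u ^ (n - 1) * (G z1 z2 w1 w2 + z1 * Gz z1 z2 w1 w2 + w1 * Gw z1 z2 w1 w2)
      + u ^ n * H z1 z2 w1 w2"
    unfolding d_lo1_def d_up1_def u_def by (rule deriv_deriv_power_mult) (rule G_z1 G_w1 G_w1z1)+
  have "d_lo2 (d_up2 (\<lambda>z1 z2 w1 w2. (w1 * z1 + w2 * z2) ^ n * G z1 z2 w1 w2)) z1 z2 w1 w2
    = deriv (\<lambda>x. deriv (\<lambda>y. (y * x + w1 * z1) ^ n * G z1 x w1 y) w2) z2"
    unfolding d_lo2_def d_up2_def by (simp add: add.commute)
  also have "\<dots> = of_nat n * of_nat (n - 1) * u ^ (n - 2) * (w2 * z2) * G z1 z2 w1 w2
      + of_nat n * u ^ (n - 1) * (G z1 z2 w1 w2 + z2 * Gz' z1 z2 w1 w2 + w2 * Gw' z1 z2 w1 w2)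
      + u ^ n * H' z1 z2 w1 w2"
    unfolding u_def add.commute[of "w1 * z1"] by (rule deriv_deriv_power_mult) (rule G_z2 G_w2 G_w2z2)+
  finally show ?thesis
    unfolding Lop_def pair1 by (simp add: u_def field_simps)
qed

lemma Lop_power_mult_bihomogeneous_harmonic:
  fixes G Gz Gz' Gw Gw' H H' :: fn4
  assumes "\<And>z1 z2 w1 w2. ((\<lambda>t. G t z2 w1 w2) has_field_derivative Gz z1 z2 w1 w2) (at z1)"
    and "\<And>z1 z2 w1 w2. ((\<lambda>t. G z1 t w1 w2) has_field_derivative Gz' z1 z2 w1 w2) (at z2)"
    and "\<And>z1 z2 w1 w2. ((\<lambda>t. G z1 z2 t w2) has_field_derivative Gw z1 z2 w1 w2) (at w1)"
    and "\<And>z1 z2 w1 w2. ((\<lambda>t. G z1 z2 w1 t) has_field_derivative Gw' z1 z2 w1 w2) (at w2)"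
    and "\<And>z1 z2 w1 w2. ((\<lambda>t. Gw t z2 w1 w2) has_field_derivative H z1 z2 w1 w2) (at z1)"
    and "\<And>z1 z2 w1 w2. ((\<lambda>t. Gw' z1 t w1 w2) has_field_derivative H' z1 z2 w1 w2) (at z2)"
    and euler_z: "\<And>z1 z2 w1 w2. z1 * Gz z1 z2 w1 w2 + z2 * Gz' z1 z2 w1 w2 = of_nat d * G z1 z2 w1 w2"
    and euler_w: "\<And>z1 z2 w1 w2. w1 * Gw z1 z2 w1 w2 + w2 * Gw' z1 z2 w1 w2 = of_nat d * G z1 z2 w1 w2"
    and harmonic: "\<And>z1 z2 w1 w2. H z1 z2 w1 w2 + H' z1 z2 w1 w2 = 0"
  shows "Lop N (\<lambda>z1 z2 w1 w2. (w1 * z1 + w2 * z2) ^ n * G z1 z2 w1 w2)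
    = (\<lambda>z1 z2 w1 w2. of_nat (n * (n + 1 + 2 * d)) / of_nat N ^ 2
                     * (w1 * z1 + w2 * z2) ^ (n - 1) * G z1 z2 w1 w2)"
proof (intro ext)
  fix z1 z2 w1 w2 :: complex
  define u where "u = w1 * z1 + w2 * z2"
  have "of_nat n * of_nat (n - 1) * u ^ (n - 2) * u = of_nat n * of_nat (n - 1) * u ^ (n - 1)"
    by (cases n; cases "n - 1") simp_all
  then have "of_nat n * of_nat (n - 1) * u ^ (n - 2) * u * G z1 z2 w1 w2
      + of_nat n * u ^ (n - 1) * (2 * G z1 z2 w1 w2 + of_nat d * G z1 z2 w1 w2 + of_nat d * G z1 z2 w1 w2)
      = of_nat (n * (n + 1 + 2 * d)) * u ^ (n - 1) * G z1 z2 w1 w2"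
    by (cases n) (simp_all add: algebra_simps)
  then show "Lop N (\<lambda>z1 z2 w1 w2. (w1 * z1 + w2 * z2) ^ n * G z1 z2 w1 w2) z1 z2 w1 w2
    = of_nat (n * (n + 1 + 2 * d)) / of_nat N ^ 2 * (w1 * z1 + w2 * z2) ^ (n - 1) * G z1 z2 w1 w2"
    unfolding Lop_power_mult[OF assms(1-6)] euler_z euler_w harmonic u_def by simp
qed

lemma Lop_power_mult_tensor_kernel:
  "Lop N (\<lambda>z1 z2 w1 w2. c * (w1 * z1 + w2 * z2) ^ n * tensor_kernel \<sigma> \<mu> z1 z2 w1 w2)
    = (\<lambda>z1 z2 w1 w2. c * of_nat (n * (n + 1 + 2 * \<sigma>)) / of_nat N ^ 2
                     * (w1 * z1 + w2 * z2) ^ (n - 1) * tensor_kernel \<sigma> \<mu> z1 z2 w1 w2)"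
proof -
  let ?K = "\<lambda>p q r s z1 z2 w1 w2. c * tensor_kernel_deriv \<sigma> \<mu> p q r s z1 z2 w1 w2"
  have "Lop N (\<lambda>z1 z2 w1 w2. (w1 * z1 + w2 * z2) ^ n * ?K 0 0 0 0 z1 z2 w1 w2)
    = (\<lambda>z1 z2 w1 w2. of_nat (n * (n + 1 + 2 * \<sigma>)) / of_nat N ^ 2
                     * (w1 * z1 + w2 * z2) ^ (n - 1) * ?K 0 0 0 0 z1 z2 w1 w2)"
  proof (rule Lop_power_mult_bihomogeneous_harmonic[where Gz = "?K 1 0 0 0" and Gz' = "?K 0 1 0 0"
        and Gw = "?K 0 0 1 0" and Gw' = "?K 0 0 0 1" and H = "?K 1 0 1 0" and H' = "?K 0 1 0 1"])
    fix z1 z2 w1 w2 :: complex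
    show "z1 * ?K 1 0 0 0 z1 z2 w1 w2 + z2 * ?K 0 1 0 0 z1 z2 w1 w2 = of_nat \<sigma> * ?K 0 0 0 0 z1 z2 w1 w2"
      using arg_cong[OF tensor_kernel_euler_z[of z1 \<sigma> \<mu> z2 w1 w2], of "\<lambda>x. c * x"] by (simp add: algebra_simps)
    show "w1 * ?K 0 0 1 0 z1 z2 w1 w2 + w2 * ?K 0 0 0 1 z1 z2 w1 w2 = of_nat \<sigma> * ?K 0 0 0 0 z1 z2 w1 w2"
      using arg_cong[OF tensor_kernel_euler_w[of w1 \<sigma> \<mu> z1 z2 w2], of "\<lambda>x. c * x"] by (simp add: algebra_simps)
    show "?K 1 0 1 0 z1 z2 w1 w2 + ?K 0 1 0 1 z1 z2 w1 w2 = 0"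
      using arg_cong[OF tensor_kernel_harmonic[of \<sigma> \<mu> z1 z2 w1 w2], of "\<lambda>x. c * x"] by (simp add: algebra_simps)
  qed (intro DERIV_cmult, rule DERIV_cong[OF tensor_kernel_deriv_z1] DERIV_cong[OF tensor_kernel_deriv_z2]
         DERIV_cong[OF tensor_kernel_deriv_w1] DERIV_cong[OF tensor_kernel_deriv_w2], simp)+
  then show ?thesis by (simp add: mult_ac)
qed

section \<open>Majorana polynomials as coefficient matrices\<close>

lemma spins_eq_image: "spins M = (\<lambda>b. int M - 2 * int b) ` {..M}"
proof (intro equalityI subsetI)
  fix m assume "m \<in> spins M"
  then have "m = int M - 2 * int (nat ((int M - m) div 2))" "nat ((int M - m) div 2) \<le> M"
    by (auto simp: spins_def elim!: evenE)
  then show "m \<in> (\<lambda>b. int M - 2 * int b) ` {..M}" by blast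
qed (auto simp: spins_def)

lemma sum_spins: "(\<Sum>m\<in>spins M. f m) = (\<Sum>b\<le>M. f (int M - 2 * int b))"
  unfolding spins_eq_image by (subst sum.reindex) (auto simp: inj_on_def)

definition bipoly :: "nat \<Rightarrow> (nat \<Rightarrow> nat \<Rightarrow> complex) \<Rightarrow> fn4" where
  "bipoly M a = (\<lambda>z1 z2 w1 w2. \<Sum>b\<le>M. \<Sum>d\<le>M. a b d * (z1 ^ (M - b) * z2 ^ b * w1 ^ (M - d) * w2 ^ d))"

lemma bipoly_cong: "(\<And>b d. b \<le> M \<Longrightarrow> d \<le> M \<Longrightarrow> a b d = a' b d) \<Longrightarrow> bipoly M a = bipoly M a'"
  unfolding bipoly_def by (intro ext sum.cong refl) auto

definition majorana_weight :: "nat \<Rightarrow> nat \<Rightarrow> real" where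
  "majorana_weight M b = (-1) ^ b * sqrt (real (M choose b))"

lemma majorana_eq_bipoly:
  "majorana M C = bipoly M (\<lambda>b d. of_real (majorana_weight M b * majorana_weight M d)
                                     * C (int M - 2 * int b) (int M - 2 * int d))"
  unfolding majorana_def bipoly_def sum_spins majorana_weight_def
  by (intro ext sum.cong refl) (simp add: half_def nat_diff_distrib mult_ac)

lemma deriv_deriv_double_sum:
  fixes c :: "nat \<Rightarrow> nat \<Rightarrow> 'a::real_normed_field"
  shows "deriv (\<lambda>x. deriv (\<lambda>y. \<Sum>b\<in>B. \<Sum>d\<in>D. c b d * x ^ p b * y ^ q d) y) x
    = (\<Sum>b\<in>B. \<Sum>d\<in>D. c b d * (of_nat (p b) * x ^ (p b - 1)) * (of_nat (q d) * y ^ (q d - 1)))"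
proof -
  have inner: "deriv (\<lambda>y. \<Sum>b\<in>B. \<Sum>d\<in>D. c b d * x ^ p b * y ^ q d) y
      = (\<Sum>b\<in>B. \<Sum>d\<in>D. c b d * x ^ p b * (of_nat (q d) * y ^ (q d - 1)))" for x
    by (rule DERIV_imp_deriv) (auto intro!: derivative_eq_intros simp: mult_ac)
  show ?thesis
    unfolding inner by (rule DERIV_imp_deriv) (auto intro!: derivative_eq_intros simp: mult_ac)
qed

lemma Lop_bipoly:
  "Lop (Suc M) (bipoly (Suc M) a) = bipoly M (\<lambda>b d.
     (of_nat ((Suc M - b) * (Suc M - d)) * a b d + of_nat ((b + 1) * (d + 1)) * a (b + 1) (d + 1))
     / of_nat (Suc M) ^ 2)"
proof (intro ext)
  fix z1 z2 w1 w2 :: complex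
  let ?mono = "\<lambda>b d. z1 ^ (M - b) * z2 ^ b * w1 ^ (M - d) * w2 ^ d"
  have "d_lo1 (d_up1 (bipoly (Suc M) a)) z1 z2 w1 w2
      = deriv (\<lambda>x. deriv (\<lambda>y. \<Sum>b\<le>Suc M. \<Sum>d\<le>Suc M.
          (a b d * z2 ^ b * w2 ^ d) * x ^ (Suc M - b) * y ^ (Suc M - d)) w1) z1"
    unfolding d_lo1_def d_up1_def bipoly_def by (simp add: mult_ac)
  also have "\<dots> = (\<Sum>b\<le>M. \<Sum>d\<le>M. of_nat ((Suc M - b) * (Suc M - d)) * a b d * ?mono b d)"
    unfolding deriv_deriv_double_sum by (simp add: mult_ac)
  finally have pair1: "d_lo1 (d_up1 (bipoly (Suc M) a)) z1 z2 w1 w2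
      = (\<Sum>b\<le>M. \<Sum>d\<le>M. of_nat ((Suc M - b) * (Suc M - d)) * a b d * ?mono b d)" .
  have "d_lo2 (d_up2 (bipoly (Suc M) a)) z1 z2 w1 w2
      = deriv (\<lambda>x. deriv (\<lambda>y. \<Sum>b\<le>Suc M. \<Sum>d\<le>Suc M.
          (a b d * z1 ^ (Suc M - b) * w1 ^ (Suc M - d)) * x ^ b * y ^ d) w2) z2"
    unfolding d_lo2_def d_up2_def bipoly_def by (simp add: mult_ac)
  also have "\<dots> = (\<Sum>b\<le>M. \<Sum>d\<le>M. of_nat ((b + 1) * (d + 1)) * a (b + 1) (d + 1) * ?mono b d)"
    by (subst deriv_deriv_double_sum) (simp add: sum.atMost_Suc_shift algebra_simps del: sum.atMost_Suc)
  finally have pair2: "d_lo2 (d_up2 (bipoly (Suc M) a)) z1 z2 w1 w2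
      = (\<Sum>b\<le>M. \<Sum>d\<le>M. of_nat ((b + 1) * (d + 1)) * a (b + 1) (d + 1) * ?mono b d)" .
  show "Lop (Suc M) (bipoly (Suc M) a) z1 z2 w1 w2 = bipoly M (\<lambda>b d.
     (of_nat ((Suc M - b) * (Suc M - d)) * a b d + of_nat ((b + 1) * (d + 1)) * a (b + 1) (d + 1))
     / of_nat (Suc M) ^ 2) z1 z2 w1 w2"
    unfolding Lop_def pair1 pair2 unfolding bipoly_def
    by (simp add: sum.distrib[symmetric] sum_distrib_left divide_inverse distrib_left distrib_right mult_ac)
qed

section \<open>Racah's formula for two equal spins\<close>

(* Summand k of Racah's formula for C^{\<sigma> \<mu>}_{s m, s -m'} with m = s - b, m' = s - d. *)
definition racah_term :: "nat \<Rightarrow> nat \<Rightarrow> nat \<Rightarrow> nat \<Rightarrow> nat \<Rightarrow> real" where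
  "racah_term N \<sigma> b d k = inv_fact (int k) * inv_fact (int N - int \<sigma> - int k)
     * inv_fact (int b - int k) * inv_fact (int d - int k)
     * inv_fact (int \<sigma> - int b + int k) * inv_fact (int \<sigma> - int d + int k)"

lemma cg_equal_spins:
  assumes "\<sigma> \<le> N" "\<bar>\<mu>\<bar> \<le> int \<sigma>" "b \<le> N" "d \<le> N"
  shows "cg (int N) (int N - 2 * int b) (int N) (2 * int d - int N) (2 * int \<sigma>) (2 * \<mu>)
    = (if int d = int b + \<mu> then
        sqrt ((2 * real \<sigma> + 1) * fact \<sigma> ^ 2 * fact (N - \<sigma>) / fact (N + \<sigma> + 1))
        * sqrt (fact (nat (int \<sigma> + \<mu>)) * fact (nat (int \<sigma> - \<mu>)) * (fact b * fact (N - b) * fact (N - d) * fact d))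
        * (\<Sum>k\<le>N. (-1) ^ k * racah_term N \<sigma> b d k)
       else 0)"
proof (cases "int d = int b + \<mu>")
  case True
  have facts: "fact2 (2 * int \<sigma> + int N - int N) = fact \<sigma>" "fact2 (2 * int \<sigma> - int N + int N) = fact \<sigma>"
    "fact2 (int N + int N - 2 * int \<sigma>) = fact (N - \<sigma>)"
    "fact2 (int N + int N + 2 * int \<sigma> + 2) = fact (N + \<sigma> + 1)"
    "fact2 (2 * int \<sigma> + 2 * \<mu>) = fact (nat (int \<sigma> + \<mu>))"
    "fact2 (2 * int \<sigma> - 2 * \<mu>) = fact (nat (int \<sigma> - \<mu>))"
    "fact2 (int N - (int N - 2 * int b)) = fact b" "fact2 (int N + (int N - 2 * int b)) = fact (N - b)"
    "fact2 (int N - (2 * int d - int N)) = fact (N - d)" "fact2 (int N + (2 * int d - int N)) = fact d"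
    using assms by (simp_all add: fact2_def half_def nat_diff_distrib nat_add_distrib)
  have ifacts: "ifact2 (2 * int k) = inv_fact k"
    "ifact2 (int N + int N - 2 * int \<sigma> - 2 * int k) = inv_fact (int N - int \<sigma> - int k)"
    "ifact2 (int N - (int N - 2 * int b) - 2 * int k) = inv_fact (int b - int k)"
    "ifact2 (int N + (2 * int d - int N) - 2 * int k) = inv_fact (int d - int k)"
    "ifact2 (2 * int \<sigma> - int N + (int N - 2 * int b) + 2 * int k) = inv_fact (int \<sigma> - int b + int k)"
    "ifact2 (2 * int \<sigma> - int N - (2 * int d - int N) + 2 * int k) = inv_fact (int \<sigma> - int d + int k)"
    for k by (simp_all add: ifact2_def inv_fact_def half_def)
  have cond: "0 \<le> int N \<and> 0 \<le> int N \<and> 0 \<le> 2 * int \<sigma>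
      \<and> \<bar>int N - 2 * int b\<bar> \<le> int N \<and> \<bar>2 * int d - int N\<bar> \<le> int N \<and> \<bar>2 * \<mu>\<bar> \<le> 2 * int \<sigma>
      \<and> even (int N + (int N - 2 * int b)) \<and> even (int N + (2 * int d - int N))
      \<and> even (2 * int \<sigma> + 2 * \<mu>) \<and> even (int N + int N + 2 * int \<sigma>)
      \<and> \<bar>int N - int N\<bar> \<le> 2 * int \<sigma> \<and> 2 * int \<sigma> \<le> int N + int N
      \<and> 2 * \<mu> = int N - 2 * int b + (2 * int d - int N)"
    using assms True by auto
  have "half (int N + int N) = N" by (simp add: half_def)
  then show ?thesis
    unfolding cg_def if_P[OF cond] facts ifacts atLeast0AtMost
    using True by (simp add: racah_term_def power2_eq_square mult_ac)
qed (simp add: cg_def)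

lemma sqrt_binomial_mult_fact: "b \<le> N \<Longrightarrow> sqrt (real (N choose b)) * sqrt (fact b * fact (N - b)) = sqrt (fact N)"
  by (metis binomial_fact_lemma mult.commute of_nat_fact of_nat_mult real_sqrt_mult)

lemma sqrt_binomials_mult_facts:
  assumes "b \<le> N" "d \<le> N"
  shows "sqrt (real (N choose b)) * sqrt (real (N choose d)) * sqrt (fact b * fact (N - b) * fact (N - d) * fact d)
    = fact N"
proof -
  have "sqrt (fact b * fact (N - b) * fact (N - d) * fact d) = sqrt (fact b * fact (N - b)) * sqrt (fact d * fact (N - d))"
    by (simp add: real_sqrt_mult[symmetric] mult_ac)
  then show ?thesis
    using sqrt_binomial_mult_fact[OF assms(1)] sqrt_binomial_mult_fact[OF assms(2)] by (simp add: mult_ac)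
qed

lemma divide_sqrt_mult: "0 \<le> x \<Longrightarrow> x / sqrt (x * y) = sqrt (x / y)"
  by (simp add: real_sqrt_mult real_sqrt_divide real_div_sqrt flip: divide_divide_eq_left)

definition kernel_norm :: "nat \<Rightarrow> int \<Rightarrow> real" where
  "kernel_norm \<sigma> \<mu> = fact \<sigma> * sqrt ((2 * real \<sigma> + 1) * fact (nat (int \<sigma> + \<mu>)) * fact (nat (int \<sigma> - \<mu>)))"

definition tpoly_const :: "nat \<Rightarrow> nat \<Rightarrow> int \<Rightarrow> real" where
  "tpoly_const N \<sigma> \<mu> = fact N / sqrt (fact (N - \<sigma>) * fact (N + \<sigma> + 1)) * kernel_norm \<sigma> \<mu>"

lemma racah_prefactor:
  "sqrt ((2 * real \<sigma> + 1) * fact \<sigma> ^ 2 * fact (N - \<sigma>) / fact (N + \<sigma> + 1))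
    * sqrt (fact (nat (int \<sigma> + \<mu>)) * fact (nat (int \<sigma> - \<mu>)) * Y)
   = sqrt (fact (N - \<sigma>) / fact (N + \<sigma> + 1)) * kernel_norm \<sigma> \<mu> * sqrt Y"
  unfolding kernel_norm_def by (simp only: real_sqrt_mult real_sqrt_divide) (simp add: mult_ac)

lemma majorana_coeff_tensor_op:
  assumes "\<sigma> \<le> N" "\<bar>\<mu>\<bar> \<le> int \<sigma>" "b \<le> N" "d \<le> N"
  shows "of_real (majorana_weight N b * majorana_weight N d) * tensor_op N \<sigma> \<mu> (int N - 2 * int b) (int N - 2 * int d)
    = (if int d = int b + \<mu>
       then of_real ((-1) ^ b * fact (N - \<sigma>) * tpoly_const N \<sigma> \<mu> * (\<Sum>k\<le>N. (-1) ^ k * racah_term N \<sigma> b d k))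
       else 0)"
proof -
  have tensor_op: "tensor_op N \<sigma> \<mu> (int N - 2 * int b) (int N - 2 * int d)
      = of_real ((-1) ^ d * cg (int N) (int N - 2 * int b) (int N) (2 * int d - int N) (2 * int \<sigma>) (2 * \<mu>))"
    by (simp add: tensor_op_def half_def)
  have real_coeff: "majorana_weight N b * majorana_weight N d * ((-1) ^ d * cg (int N) (int N - 2 * int b) (int N) (2 * int d - int N) (2 * int \<sigma>) (2 * \<mu>))
      = (-1) ^ b * fact (N - \<sigma>) * tpoly_const N \<sigma> \<mu> * (\<Sum>k\<le>N. (-1) ^ k * racah_term N \<sigma> b d k)"
    if "int d = int b + \<mu>"
  proof -
    have "fact (N - \<sigma>) * tpoly_const N \<sigma> \<mu>
        = fact N * (fact (N - \<sigma>) / sqrt (fact (N - \<sigma>) * fact (N + \<sigma> + 1))) * kernel_norm \<sigma> \<mu>"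
      unfolding tpoly_const_def by (simp add: mult_ac)
    also have "\<dots> = sqrt (real (N choose b)) * sqrt (real (N choose d)) * sqrt (fact b * fact (N - b) * fact (N - d) * fact d)
        * sqrt (fact (N - \<sigma>) / fact (N + \<sigma> + 1)) * kernel_norm \<sigma> \<mu>"
      unfolding sqrt_binomials_mult_facts[OF assms(3,4)] divide_sqrt_mult[OF fact_ge_zero] ..
    finally show ?thesis
      unfolding cg_equal_spins[OF assms] if_P[OF that] racah_prefactor majorana_weight_def
      by (simp add: mult_ac power_add[symmetric] power_mult_distrib)
  qed
  show ?thesis
  proof (cases "int d = int b + \<mu>")
    case True
    then show ?thesis unfolding tensor_op of_real_mult[symmetric] real_coeff[OF True] by simp
  next
    case False
    then show ?thesis unfolding tensor_op cg_equal_spins[OF assms] by simp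
  qed
qed

section \<open>Factorisation of the Majorana polynomial of a tensor operator\<close>

lemma sum_band_reindex:
  fixes f :: "nat \<Rightarrow> nat \<Rightarrow> 'a::comm_monoid_add"
  assumes band: "\<And>b k. f b k \<noteq> 0 \<Longrightarrow> k \<le> m \<and> k \<le> b \<and> b \<le> k + s" and "m + s \<le> n"
  shows "(\<Sum>b\<le>n. \<Sum>k\<le>n. f b k) = (\<Sum>k\<le>m. \<Sum>i\<le>s. f (k + i) k)"
proof -
  have "(\<Sum>b\<le>n. \<Sum>k\<le>n. f b k) = (\<Sum>k\<le>n. \<Sum>b\<le>n. f b k)"
    by (rule sum.swap)
  also have "\<dots> = (\<Sum>k\<le>m. \<Sum>b\<le>n. f b k)"
    using assms by (intro sum.mono_neutral_right) (auto intro!: sum.neutral)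
  also have "\<dots> = (\<Sum>k\<le>m. \<Sum>b\<in>{0 + k..s + k}. f b k)"
  proof (rule sum.cong[OF refl])
    fix k assume "k \<in> {..m}"
    then show "(\<Sum>b\<le>n. f b k) = (\<Sum>b\<in>{0 + k..s + k}. f b k)"
      using assms by (intro sum.mono_neutral_right) fastforce+
  qed
  also have "\<dots> = (\<Sum>k\<le>m. \<Sum>i\<le>s. f (k + i) k)"
    by (simp only: sum.shift_bounds_cl_nat_ivl) (simp add: atLeast0AtMost add.commute)
  finally show ?thesis .
qed

(* Contribution of the k-th Racah summand to the coefficient of z1^(N-b) z2^b w1^(N-d) w2^d, d = b + \<mu>. *)
definition racah_monomial :: "nat \<Rightarrow> nat \<Rightarrow> int \<Rightarrow> nat \<Rightarrow> nat \<Rightarrow> fn4" where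
  "racah_monomial N \<sigma> \<mu> b k = (\<lambda>z1 z2 w1 w2.
     if 0 \<le> int b + \<mu> \<and> int b + \<mu> \<le> int N
     then (-1) ^ (b + k) * of_real (racah_term N \<sigma> b (nat (int b + \<mu>)) k)
          * (z1 ^ (N - b) * z2 ^ b * w1 ^ (N - nat (int b + \<mu>)) * w2 ^ nat (int b + \<mu>))
     else 0)"

lemma racah_monomial_eq_0:
  "\<not> (k \<le> N - \<sigma> \<and> k \<le> b \<and> b \<le> k + \<sigma>) \<Longrightarrow> racah_monomial N \<sigma> \<mu> b k z1 z2 w1 w2 = 0"
  by (auto simp: racah_monomial_def racah_term_def inv_fact_neg)

lemma racah_monomial_shift:
  assumes "\<sigma> \<le> N" "k \<le> N - \<sigma>" "i \<le> \<sigma>"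
  shows "racah_monomial N \<sigma> \<mu> (k + i) k z1 z2 w1 w2
    = divpow (int (N - \<sigma> - k)) (z1 * w1) * divpow (int k) (z2 * w2)
      * ((-1) ^ i * divpow (int \<sigma> - int i) z1 * divpow (int i) z2
         * divpow (int \<sigma> - \<mu> - int i) w1 * divpow (\<mu> + int i) w2)"
proof (cases "0 \<le> \<mu> + int i \<and> \<mu> + int i \<le> int \<sigma>")
  case True
  then obtain j where j: "\<mu> + int i = int j" "j \<le> \<sigma>"
    by (metis nat_eq_iff2 nat_le_iff)
  obtain l where l: "N - \<sigma> - k = l" by simp
  have sign: "(-1::complex) ^ (k + i + k) = (-1) ^ i"
    by (simp add: power_add flip: power_mult_distrib)
  have nat_eqs: "nat (int (k + i) + \<mu>) = k + j" "N - (k + i) = l + (\<sigma> - i)" "N - (k + j) = l + (\<sigma> - j)"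
    using j l assms by auto
  have int_eqs: "int N - int \<sigma> - int k = int l" "int (k + i) - int k = int i" "int (k + j) - int k = int j"
      "int \<sigma> - int (k + i) + int k = int (\<sigma> - i)" "int \<sigma> - int (k + j) + int k = int (\<sigma> - j)"
      "int \<sigma> - \<mu> - int i = int (\<sigma> - j)" "int \<sigma> - int i = int (\<sigma> - i)"
    using j l assms by auto
  have "0 \<le> int (k + i) + \<mu> \<and> int (k + i) + \<mu> \<le> int N"
    using j l assms by auto
  then show ?thesis
    unfolding racah_monomial_def racah_term_def divpow_def if_P nat_eqs int_eqs j(1) sign l
    by (simp add: power_add field_simps)
next
  case False
  then have "divpow (\<mu> + int i) w2 = 0 \<or> divpow (int \<sigma> - \<mu> - int i) w1 = 0"
    by (auto simp: divpow_neg)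
  moreover have "racah_monomial N \<sigma> \<mu> (k + i) k z1 z2 w1 w2 = 0"
    using False by (auto simp: racah_monomial_def racah_term_def inv_fact_neg)
  ultimately show ?thesis by auto
qed

lemma majorana_row_tensor_op:
  assumes "\<sigma> \<le> N" "\<bar>\<mu>\<bar> \<le> int \<sigma>" "b \<le> N"
  shows "(\<Sum>d\<le>N. of_real (majorana_weight N b * majorana_weight N d)
        * tensor_op N \<sigma> \<mu> (int N - 2 * int b) (int N - 2 * int d) * (z1 ^ (N - b) * z2 ^ b * w1 ^ (N - d) * w2 ^ d))
    = of_real (fact (N - \<sigma>) * tpoly_const N \<sigma> \<mu>) * (\<Sum>k\<le>N. racah_monomial N \<sigma> \<mu> b k z1 z2 w1 w2)"
    (is "(\<Sum>d\<le>N. ?a d * ?mono d) = _")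
proof (cases "0 \<le> int b + \<mu> \<and> int b + \<mu> \<le> int N")
  case True
  define d0 where "d0 = nat (int b + \<mu>)"
  have d0: "int d = int b + \<mu> \<longleftrightarrow> d = d0" for d
    using True by (auto simp: d0_def)
  have "(\<Sum>d\<le>N. ?a d * ?mono d)
    = (\<Sum>d\<le>N. if d = d0 then of_real ((-1) ^ b * fact (N - \<sigma>) * tpoly_const N \<sigma> \<mu>
                  * (\<Sum>k\<le>N. (-1) ^ k * racah_term N \<sigma> b d k)) * ?mono d else 0)"
  proof (rule sum.cong[OF refl])
    fix d assume "d \<in> {..N}"
    then have "d \<le> N" by simp
    then show "?a d * ?mono d = (if d = d0 then of_real ((-1) ^ b * fact (N - \<sigma>) * tpoly_const N \<sigma> \<mu>
                  * (\<Sum>k\<le>N. (-1) ^ k * racah_term N \<sigma> b d k)) * ?mono d else 0)"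
      unfolding majorana_coeff_tensor_op[OF assms \<open>d \<le> N\<close>] d0 by simp
  qed
  then show ?thesis
    using True by (simp add: d0_def nat_le_iff racah_monomial_def sum_distrib_left power_add mult_ac)
next
  case False
  have "?a d = 0" if "d \<in> {..N}" for d
    using False that by (subst majorana_coeff_tensor_op[OF assms]) auto
  then have "(\<Sum>d\<le>N. ?a d * ?mono d) = 0"
    by (intro sum.neutral ballI) simp
  then show ?thesis
    unfolding racah_monomial_def if_not_P[OF False] by simp
qed

lemma tpoly_eq_racah_sum:
  assumes "\<sigma> \<le> N" "\<bar>\<mu>\<bar> \<le> int \<sigma>"
  shows "tpoly N \<sigma> \<mu> z1 z2 w1 w2
    = of_real (fact (N - \<sigma>) * tpoly_const N \<sigma> \<mu>) * (\<Sum>b\<le>N. \<Sum>k\<le>N. racah_monomial N \<sigma> \<mu> b k z1 z2 w1 w2)"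
proof -
  have "tpoly N \<sigma> \<mu> z1 z2 w1 w2 = (\<Sum>b\<le>N. \<Sum>d\<le>N. of_real (majorana_weight N b * majorana_weight N d)
        * tensor_op N \<sigma> \<mu> (int N - 2 * int b) (int N - 2 * int d) * (z1 ^ (N - b) * z2 ^ b * w1 ^ (N - d) * w2 ^ d))"
    unfolding tpoly_def majorana_eq_bipoly bipoly_def by (simp add: mult.assoc)
  also have "\<dots> = (\<Sum>b\<le>N. of_real (fact (N - \<sigma>) * tpoly_const N \<sigma> \<mu>)
      * (\<Sum>k\<le>N. racah_monomial N \<sigma> \<mu> b k z1 z2 w1 w2))"
    using assms by (intro sum.cong refl majorana_row_tensor_op) auto
  finally show ?thesis by (simp only: sum_distrib_left)
qed

lemma tpoly_eq_power_mult_kernel: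
  assumes "\<sigma> \<le> N" "\<bar>\<mu>\<bar> \<le> int \<sigma>"
  shows "tpoly N \<sigma> \<mu> = (\<lambda>z1 z2 w1 w2.
    of_real (tpoly_const N \<sigma> \<mu>) * (w1 * z1 + w2 * z2) ^ (N - \<sigma>) * tensor_kernel \<sigma> \<mu> z1 z2 w1 w2)"
proof (intro ext)
  fix z1 z2 w1 w2 :: complex
  have "(\<Sum>b\<le>N. \<Sum>k\<le>N. racah_monomial N \<sigma> \<mu> b k z1 z2 w1 w2)
      = (\<Sum>k\<le>N - \<sigma>. \<Sum>i\<le>\<sigma>. racah_monomial N \<sigma> \<mu> (k + i) k z1 z2 w1 w2)"
    using assms(1) racah_monomial_eq_0 by (intro sum_band_reindex) (simp_all, blast)
  also have "\<dots> = (\<Sum>k\<le>N - \<sigma>. divpow (int (N - \<sigma> - k)) (z1 * w1) * divpow (int k) (z2 * w2))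
      * tensor_kernel \<sigma> \<mu> z1 z2 w1 w2"
    using assms(1)
    by (simp add: racah_monomial_shift tensor_kernel_deriv_def sum_product mult.assoc)
  also have "\<dots> = (z1 * w1 + z2 * w2) ^ (N - \<sigma>) / fact (N - \<sigma>) * tensor_kernel \<sigma> \<mu> z1 z2 w1 w2"
    by (simp only: divpow_binomial)
  finally show "tpoly N \<sigma> \<mu> z1 z2 w1 w2
      = of_real (tpoly_const N \<sigma> \<mu>) * (w1 * z1 + w2 * z2) ^ (N - \<sigma>) * tensor_kernel \<sigma> \<mu> z1 z2 w1 w2"
    unfolding tpoly_eq_racah_sum[OF assms] by (simp add: mult.commute)
qed

lemma tpoly_const_Suc:
  assumes "\<sigma> \<le> M"
  shows "tpoly_const (Suc M) \<sigma> \<mu>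
    = real (Suc M) / sqrt (real ((Suc M + \<sigma> + 1) * (Suc M - \<sigma>))) * tpoly_const M \<sigma> \<mu>"
proof -
  obtain n where M: "M = \<sigma> + n" using assms le_Suc_ex by blast
  have "sqrt (fact (Suc M - \<sigma>) * fact (Suc M + \<sigma> + 1))
      = sqrt (real ((Suc M + \<sigma> + 1) * (Suc M - \<sigma>))) * sqrt (fact (M - \<sigma>) * fact (M + \<sigma> + 1))"
    unfolding M by (simp add: real_sqrt_mult[symmetric] algebra_simps)
  then show ?thesis
    unfolding tpoly_const_def by (simp add: divide_inverse mult_ac)
qed

lemma tpoly_const_rescale:
  assumes "\<sigma> < N"
  shows "tpoly_const N \<sigma> \<mu> * real ((N + \<sigma> + 1) * (N - \<sigma>)) / real N ^ 2
    = sqrt (real ((N + \<sigma> + 1) * (N - \<sigma>))) / real N * tpoly_const (N - 1) \<sigma> \<mu>"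
proof -
  obtain M where M: "N = Suc M" "\<sigma> \<le> M"
    using assms by (cases N) auto
  define P where "P = real ((N + \<sigma> + 1) * (N - \<sigma>))"
  have P: "P > 0" unfolding P_def using assms by (subst of_nat_0_less_iff) simp
  have "tpoly_const N \<sigma> \<mu> * P / real N ^ 2
      = real N / sqrt P * tpoly_const M \<sigma> \<mu> * (sqrt P * sqrt P) / real N ^ 2"
    unfolding P_def M(1) tpoly_const_Suc[OF M(2)] by simp
  also have "\<dots> = sqrt P / real N * tpoly_const M \<sigma> \<mu>"
    using P assms by (simp add: power2_eq_square field_simps del: real_sqrt_mult_self)
  finally show ?thesis unfolding P_def M(1) by simp
qed

lemma tpoly_const_eq_lcoef:
  assumes "\<sigma> \<le> N"
  shows "tpoly_const N \<sigma> \<mu> = inverse (lcoef N \<sigma>) * tpoly_const \<sigma> \<sigma> \<mu>"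
proof -
  have "2 * \<sigma> + 1 = \<sigma> + \<sigma> + 1" by simp
  then have "sqrt (fact (N + \<sigma> + 1) * fact (N - \<sigma>) / fact (2 * \<sigma> + 1))
      = sqrt (fact (N - \<sigma>) * fact (N + \<sigma> + 1)) / sqrt (fact (\<sigma> + \<sigma> + 1) :: real)"
    by (simp only:) (simp add: real_sqrt_divide mult.commute)
  moreover have "sqrt (fact (\<sigma> + \<sigma> + 1) :: real) > 0" "(fact \<sigma> :: real) > 0" by simp_all
  ultimately show ?thesis
    unfolding tpoly_const_def lcoef_def by (simp add: field_simps)
qed

lemma Lop_tpoly:
  assumes "\<sigma> \<le> N" "\<bar>\<mu>\<bar> \<le> int \<sigma>"
  shows "Lop N (tpoly N \<sigma> \<mu>) =
    (if int \<sigma> < int N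
     then (\<lambda>z1 z2 w1 w2. complex_of_real (sqrt (real ((N + \<sigma> + 1) * (N - \<sigma>))) / real N)
                          * tpoly (N - 1) \<sigma> \<mu> z1 z2 w1 w2)
     else (\<lambda>z1 z2 w1 w2. 0))"
proof (cases "\<sigma> < N")
  case True
  have "N - \<sigma> + 1 + 2 * \<sigma> = N + \<sigma> + 1"
    using True by simp
  then have "of_real (tpoly_const N \<sigma> \<mu>) * of_nat ((N - \<sigma>) * (N - \<sigma> + 1 + 2 * \<sigma>)) / of_nat N ^ 2
      = complex_of_real (tpoly_const N \<sigma> \<mu> * real ((N + \<sigma> + 1) * (N - \<sigma>)) / real N ^ 2)"
    by (simp only: mult.commute of_real_mult of_real_divide of_real_of_nat_eq of_real_power)
  also have "\<dots> = complex_of_real (sqrt (real ((N + \<sigma> + 1) * (N - \<sigma>))) / real N)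
      * of_real (tpoly_const (N - 1) \<sigma> \<mu>)"
    unfolding tpoly_const_rescale[OF True] by simp
  finally have coeff: "of_real (tpoly_const N \<sigma> \<mu>) * of_nat ((N - \<sigma>) * (N - \<sigma> + 1 + 2 * \<sigma>)) / of_nat N ^ 2
      = complex_of_real (sqrt (real ((N + \<sigma> + 1) * (N - \<sigma>))) / real N) * of_real (tpoly_const (N - 1) \<sigma> \<mu>)" .
  have "N - \<sigma> - 1 = N - 1 - \<sigma>" "\<sigma> \<le> N - 1" using True by simp_all
  then show ?thesis
    unfolding tpoly_eq_power_mult_kernel[OF assms] Lop_power_mult_tensor_kernel coeff
    using True by (simp add: tpoly_eq_power_mult_kernel[OF _ assms(2)] mult.assoc)
next
  case False
  then show ?thesis
    unfolding tpoly_eq_power_mult_kernel[OF assms] Lop_power_mult_tensor_kernel by simp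
qed

lemma Lop_tpoly_scalar:
  assumes "1 \<le> N"
  shows "complex_of_real (1 / sqrt (real (N + 1))) * Lop N (tpoly N 0 0) z1 z2 w1 w2
    = complex_of_real (1 / sqrt (real N)) * tpoly (N - 1) 0 0 z1 z2 w1 w2"
proof -
  have "sqrt (real ((N + 0 + 1) * (N - 0))) = sqrt (real (N + 1)) * sqrt (real N)"
    by (simp only: add_0_right diff_zero of_nat_mult real_sqrt_mult)
  moreover have "real N = sqrt (real N) * sqrt (real N)" by simp
  ultimately have coeff: "1 / sqrt (real (N + 1)) * (sqrt (real ((N + 0 + 1) * (N - 0))) / real N) = 1 / sqrt (real N)"
    using assms by (simp add: field_simps del: real_sqrt_mult_self)
  have L: "Lop N (tpoly N 0 0) z1 z2 w1 w2
      = complex_of_real (sqrt (real ((N + 0 + 1) * (N - 0))) / real N) * tpoly (N - 1) 0 0 z1 z2 w1 w2"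
    using assms by (subst Lop_tpoly) auto
  show ?thesis
    unfolding L mult.assoc[symmetric] of_real_mult[symmetric] coeff ..
qed

section \<open>Preservation of the trace\<close>

(* Partial trace over one of the N spin-1/2 constituents of the spin-N/2 space, viewed as the
   symmetric part of their tensor product: |s,m> = sqrt((s+m)/2s) |s-1/2,m-1/2> (x) |up>
   + sqrt((s-m)/2s) |s-1/2,m+1/2> (x) |down>. *)
definition partial_trace :: "nat \<Rightarrow> op \<Rightarrow> op" where
  "partial_trace M C = (\<lambda>m m'.
     (complex_of_real (sqrt (real ((Suc M - half (int M - m)) * (Suc M - half (int M - m'))))) * C (m + 1) (m' + 1)
      + complex_of_real (sqrt (real ((half (int M - m) + 1) * (half (int M - m') + 1)))) * C (m - 1) (m' - 1))
     / of_nat (Suc M))"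

lemma partial_trace_at:
  "partial_trace M C (int M - 2 * int b) (int M - 2 * int d)
    = (complex_of_real (sqrt (real ((Suc M - b) * (Suc M - d)))) * C (int (Suc M) - 2 * int b) (int (Suc M) - 2 * int d)
       + complex_of_real (sqrt (real ((b + 1) * (d + 1))))
         * C (int (Suc M) - 2 * int (b + 1)) (int (Suc M) - 2 * int (d + 1)))
      / of_nat (Suc M)"
proof -
  have "half (int M - (int M - 2 * int b)) = b" "half (int M - (int M - 2 * int d)) = d"
    by (simp_all add: half_def)
  moreover have "int M - 2 * int b + 1 = int (Suc M) - 2 * int b" "int M - 2 * int d + 1 = int (Suc M) - 2 * int d"
    "int M - 2 * int b - 1 = int (Suc M) - 2 * int (b + 1)" "int M - 2 * int d - 1 = int (Suc M) - 2 * int (d + 1)"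
    by simp_all
  ultimately show ?thesis unfolding partial_trace_def by presburger
qed

lemma mult_sqrt_eq:
  fixes x y k z :: real
  assumes "0 \<le> x" "x * y = k * z"
  shows "x * sqrt y = sqrt k * sqrt x * sqrt z"
proof -
  have "x * sqrt y = sqrt (x * (x * y))" using assms(1) by (simp add: real_sqrt_mult)
  then show ?thesis unfolding assms(2) by (simp add: real_sqrt_mult mult_ac)
qed

lemma majorana_weight_Suc:
  "b \<le> M \<Longrightarrow> real (Suc M - b) * majorana_weight (Suc M) b
     = sqrt (real (Suc M)) * sqrt (real (Suc M - b)) * majorana_weight M b"
  "real (b + 1) * majorana_weight (Suc M) (b + 1)
     = - (sqrt (real (Suc M)) * sqrt (real (b + 1)) * majorana_weight M b)"
proof -
  assume "b \<le> M"
  have "real (Suc M - b) * real (Suc M choose b) = real (Suc M) * real (M choose b)"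
    using binomial_absorb_comp[of "Suc M" b] by (metis diff_Suc_1 of_nat_mult)
  from mult_sqrt_eq[OF _ this] show "real (Suc M - b) * majorana_weight (Suc M) b
     = sqrt (real (Suc M)) * sqrt (real (Suc M - b)) * majorana_weight M b"
    unfolding majorana_weight_def by (simp add: mult_ac)
next
  have "real (b + 1) * real (Suc M choose (b + 1)) = real (Suc M) * real (M choose b)"
    using Suc_times_binomial[of b M] by (metis Suc_eq_plus1 of_nat_mult)
  from mult_sqrt_eq[OF _ this] show "real (b + 1) * majorana_weight (Suc M) (b + 1)
     = - (sqrt (real (Suc M)) * sqrt (real (b + 1)) * majorana_weight M b)"
    unfolding majorana_weight_def by (simp add: mult_ac)
qed

lemma majorana_weight_Suc_mult:
  "b \<le> M \<Longrightarrow> d \<le> M \<Longrightarrow>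
    real ((Suc M - b) * (Suc M - d)) * (majorana_weight (Suc M) b * majorana_weight (Suc M) d)
    = real (Suc M) * sqrt (real ((Suc M - b) * (Suc M - d))) * (majorana_weight M b * majorana_weight M d)"
  "real ((b + 1) * (d + 1)) * (majorana_weight (Suc M) (b + 1) * majorana_weight (Suc M) (d + 1))
    = real (Suc M) * sqrt (real ((b + 1) * (d + 1))) * (majorana_weight M b * majorana_weight M d)"
proof -
  assume "b \<le> M" "d \<le> M"
  have "real ((Suc M - b) * (Suc M - d)) * (majorana_weight (Suc M) b * majorana_weight (Suc M) d)
      = (real (Suc M - b) * majorana_weight (Suc M) b) * (real (Suc M - d) * majorana_weight (Suc M) d)"
    by (simp add: mult_ac)
  also have "\<dots> = (sqrt (real (Suc M)) * sqrt (real (Suc M))) * (sqrt (real (Suc M - b)) * sqrt (real (Suc M - d)))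
      * (majorana_weight M b * majorana_weight M d)"
    unfolding majorana_weight_Suc(1)[OF \<open>b \<le> M\<close>] majorana_weight_Suc(1)[OF \<open>d \<le> M\<close>] by (simp only: mult_ac)
  finally show "real ((Suc M - b) * (Suc M - d)) * (majorana_weight (Suc M) b * majorana_weight (Suc M) d)
    = real (Suc M) * sqrt (real ((Suc M - b) * (Suc M - d))) * (majorana_weight M b * majorana_weight M d)"
    by (simp only: of_nat_mult real_sqrt_mult real_sqrt_mult_self abs_of_nat)
next
  have "real ((b + 1) * (d + 1)) * (majorana_weight (Suc M) (b + 1) * majorana_weight (Suc M) (d + 1))
      = (real (b + 1) * majorana_weight (Suc M) (b + 1)) * (real (d + 1) * majorana_weight (Suc M) (d + 1))"
    by (simp only: of_nat_mult mult_ac)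
  also have "\<dots> = (sqrt (real (Suc M)) * sqrt (real (Suc M))) * (sqrt (real (b + 1)) * sqrt (real (d + 1)))
      * (majorana_weight M b * majorana_weight M d)"
    unfolding majorana_weight_Suc(2) by (simp add: mult_ac)
  finally show "real ((b + 1) * (d + 1)) * (majorana_weight (Suc M) (b + 1) * majorana_weight (Suc M) (d + 1))
    = real (Suc M) * sqrt (real ((b + 1) * (d + 1))) * (majorana_weight M b * majorana_weight M d)"
    by (simp only: of_nat_mult real_sqrt_mult real_sqrt_mult_self abs_of_nat)
qed

lemma majorana_partial_trace: "majorana M (partial_trace M C) = Lop (Suc M) (majorana (Suc M) C)"
  unfolding majorana_eq_bipoly Lop_bipoly
proof (rule bipoly_cong)
  fix b d assume "b \<le> M" "d \<le> M"
  have lift: "(of_nat p :: complex) * (of_real x * c) = of_real (real p * x) * c" for p x c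
    by simp
  show "of_real (majorana_weight M b * majorana_weight M d) * partial_trace M C (int M - 2 * int b) (int M - 2 * int d)
    = (of_nat ((Suc M - b) * (Suc M - d))
         * (of_real (majorana_weight (Suc M) b * majorana_weight (Suc M) d)
            * C (int (Suc M) - 2 * int b) (int (Suc M) - 2 * int d))
       + of_nat ((b + 1) * (d + 1))
         * (of_real (majorana_weight (Suc M) (b + 1) * majorana_weight (Suc M) (d + 1))
            * C (int (Suc M) - 2 * int (b + 1)) (int (Suc M) - 2 * int (d + 1))))
      / of_nat (Suc M) ^ 2"
    unfolding partial_trace_at lift majorana_weight_Suc_mult(1)[OF \<open>b \<le> M\<close> \<open>d \<le> M\<close>] majorana_weight_Suc_mult(2)
    by (simp add: power2_eq_square field_simps del: of_nat_Suc)
qed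

lemma op_trace_partial_trace: "op_trace M (partial_trace M C) = op_trace (Suc M) C"
proof -
  define f where "f b = C (int (Suc M) - 2 * int b) (int (Suc M) - 2 * int b)" for b
  have sqrt_square: "sqrt (real (x * x)) = real x" for x by simp
  have "op_trace M (partial_trace M C)
      = (\<Sum>b\<le>M. (of_nat (Suc M - b) * f b + of_nat (Suc b) * f (Suc b)) / of_nat (Suc M))"
    unfolding op_trace_def sum_spins partial_trace_at f_def sqrt_square by (simp del: of_nat_Suc)
  also have "\<dots> = ((\<Sum>b\<le>M. of_nat (Suc M - b) * f b) + (\<Sum>b\<le>M. of_nat (Suc b) * f (Suc b))) / of_nat (Suc M)"
    by (simp add: sum.distrib sum_divide_distrib add_divide_distrib del: of_nat_Suc)
  also have "\<dots> = (\<Sum>b\<le>Suc M. (of_nat (Suc M - b) + of_nat b) * f b) / of_nat (Suc M)"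
  proof -
    have "(\<Sum>b\<le>M. of_nat (Suc M - b) * f b) = (\<Sum>b\<le>Suc M. of_nat (Suc M - b) * f b)"
      by simp
    moreover have "(\<Sum>b\<le>M. of_nat (Suc b) * f (Suc b)) = (\<Sum>b\<le>Suc M. of_nat b * f b)"
      by (simp add: sum.atMost_Suc_shift del: sum.atMost_Suc)
    ultimately show ?thesis by (simp only: sum.distrib distrib_right)
  qed
  also have "\<dots> = (\<Sum>b\<le>Suc M. f b)"
    by (simp add: sum_distrib_left[symmetric] del: of_nat_Suc)
  also have "\<dots> = op_trace (Suc M) C"
    unfolding op_trace_def sum_spins f_def ..
  finally show ?thesis .
qed

(* Since L acts on Majorana polynomials as the partial trace, which preserves traces,
   evaluating L_1 (L_2 ( ... L_N p)) at 0 recovers Tr C from p = p_C alone. *)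
fun poly_trace :: "nat \<Rightarrow> fn4 \<Rightarrow> complex" where
  "poly_trace 0 p = p 0 0 0 0"
| "poly_trace (Suc M) p = poly_trace M (Lop (Suc M) p)"

lemma poly_trace_majorana: "poly_trace M (majorana M C) = op_trace M C"
proof (induction M arbitrary: C)
  case 0
  have "spins 0 = {0}" by (auto simp: spins_def)
  then show ?case by (simp add: majorana_def op_trace_def half_def)
next
  case (Suc M)
  then show ?case
    by (simp flip: majorana_partial_trace op_trace_partial_trace)
qed

lemma op_trace_eq_if_majorana_eq_Lop:
  assumes "majorana M C' = Lop (Suc M) (majorana (Suc M) C)"
  shows "op_trace M C' = op_trace (Suc M) C"
  by (metis assms poly_trace.simps(2) poly_trace_majorana)

theorem theorem1:
  fixes N \<sigma> :: nat and \<mu> :: int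
  assumes "1 \<le> N" and "\<sigma> \<le> N" and "\<bar>\<mu>\<bar> \<le> int \<sigma>"
  shows "Lop N (tpoly N \<sigma> \<mu>) =
           (if int \<sigma> < int N
            then (\<lambda>z1 z2 w1 w2. complex_of_real (sqrt (real ((N + \<sigma> + 1) * (N - \<sigma>))) / real N)
                                  * tpoly (N - 1) \<sigma> \<mu> z1 z2 w1 w2)
            else (\<lambda>z1 z2 w1 w2. 0))
       \<and> (\<forall>z1 z2 w1 w2. complex_of_real (1 / sqrt (real (N + 1))) * Lop N (tpoly N 0 0) z1 z2 w1 w2
              = complex_of_real (1 / sqrt (real N)) * tpoly (N - 1) 0 0 z1 z2 w1 w2)
       \<and> (2 \<le> N \<longrightarrow> (\<forall>C C'. majorana (N - 1) C' = Lop N (majorana N C)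
                               \<longrightarrow> op_trace (N - 1) C' = op_trace N C))
       \<and> (\<forall>z1 z2 w1 w2. tpoly N \<sigma> \<mu> z1 z2 w1 w2
              = complex_of_real (inverse (lcoef N \<sigma>)) * (w1 * z1 + w2 * z2) ^ (N - \<sigma>)
                * tpoly \<sigma> \<sigma> \<mu> z1 z2 w1 w2)"
proof -
  have trace: "op_trace (N - 1) C' = op_trace N C" if "majorana (N - 1) C' = Lop N (majorana N C)" for C C'
    using that op_trace_eq_if_majorana_eq_Lop[of "N - 1"] assms(1) by simp
  have factor: "tpoly N \<sigma> \<mu> z1 z2 w1 w2
      = complex_of_real (inverse (lcoef N \<sigma>)) * (w1 * z1 + w2 * z2) ^ (N - \<sigma>) * tpoly \<sigma> \<sigma> \<mu> z1 z2 w1 w2"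
    for z1 z2 w1 w2
    unfolding tpoly_eq_power_mult_kernel[OF assms(2,3)] tpoly_eq_power_mult_kernel[OF order_refl assms(3)]
      tpoly_const_eq_lcoef[OF assms(2)]
    by (simp add: mult_ac)
  show ?thesis
    using Lop_tpoly[OF assms(2,3)] Lop_tpoly_scalar[OF assms(1)] trace factor by blast
qed

end
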